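(* Let $J\subseteq\mathbb{R}$ be an interval, $f:J\to\mathbb{R}$ convex, $a,b\in J$, and $\nu\in[0,1]$. Then $$2\widetilde r(\nu)\big(f(a)\nabla f(b)-f(a\nabla b)\big)\le f(a)\nabla_\nu f(b)-\mathfrak C_{f,\nu}(a,b)\le 2\widetilde R(\nu)\big(f(a)\nabla f(b)-f(a\nabla b)\big).$$
   Context: For real $x,y$ and $\mu\in[0,1]$, $x\nabla_\mu y:=(1-\mu)x+\mu y$ and $x\nabla y:=\frac{x+y}{2}$. For $f$ convex on an interval containing $a,b$, $$\mathfrak C_{f,\nu}(a,b):=(1-\nu)\int_0^1 f\big(a\nabla_{\nu\lambda}b\big)\,d\lambda+\nu\int_0^1 f\big(b\nabla_{(1-\nu)\lambda}a\big)\,d\lambda .$$ For $\lambda\in[0,1]$ let $r_1(\lambda)=\min\{\nu\lambda,1-\nu\lambda\}$, $r_2(\lambda)=\min\{(1-\nu)\lambda,1-(1-\nu)\lambda\}$, $R_1(\lambda)=\max\{\nu\lambda,1-\nu\lambda\}$, $R_2(\lambda)=\max\{(1-\nu)\lambda,1-(1-\nu)\lambda\}$, and $$\widetilde r(\nu):=\int_0^1\big((1-\nu)r_1(\lambda)+\nu r_2(\lambda)\big)d\lambda,\qquad \widetilde R(\nu):=\int_0^1\big((1-\nu)R_1(\lambda)+\nu R_2(\lambda)\big)d\lambda .$$ *)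

theory Defs
  imports "HOL-Analysis.Analysis"
begin

definition wmean :: "real \<Rightarrow> real \<Rightarrow> real \<Rightarrow> real" where
  "wmean \<mu> x y = (1 - \<mu>) * x + \<mu> * y"

definition amean :: "real \<Rightarrow> real \<Rightarrow> real" where
  "amean x y = (x + y) / 2"

definition Cfrak :: "(real \<Rightarrow> real) \<Rightarrow> real \<Rightarrow> real \<Rightarrow> real \<Rightarrow> real" where
  "Cfrak f \<nu> a b =
     (1 - \<nu>) * integral {0..1} (\<lambda>t. f (wmean (\<nu> * t) a b))
     + \<nu> * integral {0..1} (\<lambda>t. f (wmean ((1 - \<nu>) * t) b a))"

definition r_tilde :: "real \<Rightarrow> real" where
  "r_tilde \<nu> = integral {0..1} (\<lambda>t.
      (1 - \<nu>) * min (\<nu> * t) (1 - \<nu> * t)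
      + \<nu> * min ((1 - \<nu>) * t) (1 - (1 - \<nu>) * t))"

definition R_tilde :: "real \<Rightarrow> real" where
  "R_tilde \<nu> = integral {0..1} (\<lambda>t.
      (1 - \<nu>) * max (\<nu> * t) (1 - \<nu> * t)
      + \<nu> * max ((1 - \<nu>) * t) (1 - (1 - \<nu>) * t))"

end

theory Submission
  imports Defs
begin

text \<open>
  Write \<open>jensen_gap f \<mu> a b\<close> for the defect of Jensen's inequality at weight \<open>\<mu>\<close>. Splitting
  the segment at its midpoint and applying convexity on each half pins the gap at weight \<open>\<mu>\<close>
  between \<open>2 min \<mu> (1 - \<mu>)\<close> and \<open>2 max \<mu> (1 - \<mu>)\<close> times the midpoint gap. The quantity
  \<open>wmean \<nu> (f a) (f b) - Cfrak f \<nu> a b\<close> is the integral over \<open>\<lambda> \<in> [0, 1]\<close> of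
  \<open>(1 - \<nu>)\<close> times the gap at weight \<open>\<nu>\<lambda>\<close> plus \<open>\<nu>\<close> times the gap at weight \<open>(1 - \<nu>)\<lambda>\<close>
  (with \<open>a\<close> and \<open>b\<close> exchanged); integrating the pointwise bounds gives the claim.
\<close>

definition jensen_gap :: "(real \<Rightarrow> real) \<Rightarrow> real \<Rightarrow> real \<Rightarrow> real \<Rightarrow> real" where
  "jensen_gap f \<mu> a b = wmean \<mu> (f a) (f b) - f (wmean \<mu> a b)"

lemma wmean_half: "wmean (1/2) x y = amean x y"
  by (simp add: wmean_def amean_def field_simps)

lemma jensen_gap_half: "jensen_gap f (1/2) a b = amean (f a) (f b) - f (amean a b)"
  by (simp add: jensen_gap_def wmean_half)

lemma jensen_gap_swap: "jensen_gap f (1 - \<mu>) b a = jensen_gap f \<mu> a b"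
  by (simp add: jensen_gap_def wmean_def algebra_simps)

lemma wmean_in_convex:
  assumes "convex J" "a \<in> J" "b \<in> J" "0 \<le> \<mu>" "\<mu> \<le> 1"
  shows "wmean \<mu> a b \<in> J"
  using convexD[OF assms(1-3), of "1 - \<mu>" \<mu>] assms(4,5) by (simp add: wmean_def)

lemma convex_on_Icc_integrable:
  fixes h :: "real \<Rightarrow> real"
  assumes cv: "convex_on {c..d} h"
  shows "h integrable_on {c..d}"
proof -
  define M where "M = max (h c) (h d)"
  define m where "m = (c + d) / 2"
  have upper: "h t \<le> M" if "t \<in> {c..d}" for t
    using convex_on_le_max[OF cv that] by (simp add: M_def)
  have lower: "2 * h m - M \<le> h t" if t: "t \<in> {c..d}" for t
  proof -
    have "m = (1 - 1/2) *\<^sub>R t + (1/2) *\<^sub>R (c + d - t)"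
      by (simp add: m_def field_simps)
    then have "h m \<le> (1 - 1/2) * h t + (1/2) * h (c + d - t)"
      using convex_onD[OF cv, of "1/2" t "c + d - t"] t by auto
    moreover have "h (c + d - t) \<le> M"
      using upper t by auto
    ultimately show ?thesis by simp
  qed
  have "continuous_on {c<..<d} h"
    by (rule convex_on_continuous) (auto intro: convex_on_subset[OF cv])
  then have "h integrable_on {c<..<d}"
  proof (rule measurable_bounded_by_integrable_imp_integrable
      [OF continuous_imp_measurable_on_sets_lebesgue])
    show "(\<lambda>_. \<bar>M\<bar> + \<bar>2 * h m - M\<bar>) integrable_on {c<..<d}"
      by (simp add: integrable_on_Icc_iff_Ioo[symmetric] integrable_const_ivl)
    show "norm (h t) \<le> \<bar>M\<bar> + \<bar>2 * h m - M\<bar>" if "t \<in> {c<..<d}" for t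
      using upper[of t] lower[of t] that by auto
  qed auto
  then show ?thesis
    by (simp add: integrable_on_Icc_iff_Ioo)
qed

lemma convex_on_wmean_segment:
  assumes cv: "convex_on J f" and J: "convex J" and a: "a \<in> J" and b: "b \<in> J"
    and c: "0 \<le> c" "c \<le> 1"
  shows "convex_on {0..1} (\<lambda>t. f (wmean (c * t) a b))"
proof (rule convex_onI)
  have inJ: "wmean (c * x) a b \<in> J" if "x \<in> {0..1}" for x
    using that c by (intro wmean_in_convex[OF J a b]) (auto intro: mult_le_one)
  fix t x y :: real
  assume t: "0 < t" "t < 1" and xy: "x \<in> {0..1}" "y \<in> {0..1}"
  have "wmean (c * ((1 - t) *\<^sub>R x + t *\<^sub>R y)) a b
      = (1 - t) *\<^sub>R wmean (c * x) a b + t *\<^sub>R wmean (c * y) a b"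
    by (simp add: wmean_def algebra_simps)
  then show "f (wmean (c * ((1 - t) *\<^sub>R x + t *\<^sub>R y)) a b)
      \<le> (1 - t) * f (wmean (c * x) a b) + t * f (wmean (c * y) a b)"
    using convex_onD[OF cv, of t] t inJ xy by auto
qed auto

lemma has_integral_wmean_scaled:
  "((\<lambda>t. wmean (c * t) x y) has_integral wmean (c / 2) x y) {0..1}"
proof -
  have "((\<lambda>t. x + c * (y - x) * t) has_integral
      ((\<lambda>t. x * t + c * (y - x) * t\<^sup>2 / 2) 1 - (\<lambda>t. x * t + c * (y - x) * t\<^sup>2 / 2) 0)) {0..1}"
    by (rule fundamental_theorem_of_calculus)
      (auto intro!: derivative_eq_intros
        simp: has_real_derivative_iff_has_vector_derivative[symmetric])
  then show ?thesis
    by (simp add: wmean_def algebra_simps diff_divide_distrib)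
qed

lemma jensen_gap_bounds_half:
  assumes cv: "convex_on J f" and J: "convex J" and a: "a \<in> J" and b: "b \<in> J"
    and \<mu>: "0 \<le> \<mu>" "\<mu> \<le> 1/2"
  shows "2 * \<mu> * jensen_gap f (1/2) a b \<le> jensen_gap f \<mu> a b"
    and "jensen_gap f \<mu> a b \<le> 2 * (1 - \<mu>) * jensen_gap f (1/2) a b"
proof -
  have mid: "wmean (1/2) a b \<in> J" and x: "wmean \<mu> a b \<in> J"
    using \<mu> by (auto intro: wmean_in_convex[OF J a b])
  text \<open>The point at weight \<open>\<mu>\<close> lies between \<open>a\<close> and the midpoint \<dots>\<close>
  have "wmean \<mu> a b = (1 - 2 * \<mu>) *\<^sub>R a + (2 * \<mu>) *\<^sub>R wmean (1/2) a b"
    by (simp add: wmean_def algebra_simps)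
  then have "f (wmean \<mu> a b) \<le> (1 - 2 * \<mu>) * f a + (2 * \<mu>) * f (wmean (1/2) a b)"
    using convex_onD[OF cv, of "2 * \<mu>" a "wmean (1/2) a b"] \<mu> a mid by auto
  then show "2 * \<mu> * jensen_gap f (1/2) a b \<le> jensen_gap f \<mu> a b"
    by (simp add: jensen_gap_def wmean_def algebra_simps)
  text \<open>\<dots> and the midpoint lies between it and \<open>b\<close>, at relative position \<open>s\<close>.\<close>
  define s where "s = 1 / (2 * (1 - \<mu>))"
  have s: "0 \<le> s" "s \<le> 1" "s * (1 - \<mu>) = 1/2"
    using \<mu> by (auto simp: s_def field_simps)
  have "(1 - s) *\<^sub>R b + s *\<^sub>R wmean \<mu> a b = b - (s * (1 - \<mu>)) * b + (s * (1 - \<mu>)) * a"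
    by (simp add: wmean_def algebra_simps)
  then have "wmean (1/2) a b = (1 - s) *\<^sub>R b + s *\<^sub>R wmean \<mu> a b"
    unfolding s(3) by (simp add: wmean_def)
  then have "f (wmean (1/2) a b) \<le> (1 - s) * f b + s * f (wmean \<mu> a b)"
    using convex_onD[OF cv, of s b "wmean \<mu> a b"] s b x by auto
  then have "2 * (1 - \<mu>) * f (wmean (1/2) a b)
      \<le> 2 * (1 - \<mu>) * f b - 2 * (s * (1 - \<mu>)) * f b + 2 * (s * (1 - \<mu>)) * f (wmean \<mu> a b)"
    using \<mu> mult_left_mono[of _ _ "2 * (1 - \<mu>)"] by (fastforce simp: algebra_simps)
  then show "jensen_gap f \<mu> a b \<le> 2 * (1 - \<mu>) * jensen_gap f (1/2) a b"
    unfolding s(3) by (simp add: jensen_gap_def wmean_def algebra_simps)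
qed

lemma jensen_gap_bounds:
  assumes cv: "convex_on J f" and J: "convex J" and a: "a \<in> J" and b: "b \<in> J"
    and \<mu>: "0 \<le> \<mu>" "\<mu> \<le> 1"
  shows "2 * min \<mu> (1 - \<mu>) * jensen_gap f (1/2) a b \<le> jensen_gap f \<mu> a b"
    and "jensen_gap f \<mu> a b \<le> 2 * max \<mu> (1 - \<mu>) * jensen_gap f (1/2) a b"
proof -
  have "2 * min \<mu> (1 - \<mu>) * jensen_gap f (1/2) a b \<le> jensen_gap f \<mu> a b
      \<and> jensen_gap f \<mu> a b \<le> 2 * max \<mu> (1 - \<mu>) * jensen_gap f (1/2) a b"
  proof (cases "\<mu> \<le> 1/2")
    case True
    then show ?thesis
      using jensen_gap_bounds_half[OF cv J a b \<mu>(1) True] by (simp add: min_def max_def)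
  next
    case False
    then have "0 \<le> 1 - \<mu>" "1 - \<mu> \<le> 1/2"
      using \<mu> by auto
    from jensen_gap_bounds_half[OF cv J b a this] False show ?thesis
      using jensen_gap_swap[of f "1/2" a b] by (simp add: jensen_gap_swap min_def max_def)
  qed
  then show "2 * min \<mu> (1 - \<mu>) * jensen_gap f (1/2) a b \<le> jensen_gap f \<mu> a b"
    and "jensen_gap f \<mu> a b \<le> 2 * max \<mu> (1 - \<mu>) * jensen_gap f (1/2) a b"
    by auto
qed

lemma has_integral_wmean_minus_Cfrak:
  assumes cv: "convex_on J f" and J: "convex J" and a: "a \<in> J" and b: "b \<in> J"
    and \<nu>: "0 \<le> \<nu>" "\<nu> \<le> 1"
  shows "((\<lambda>t. (1 - \<nu>) * jensen_gap f (\<nu> * t) a b + \<nu> * jensen_gap f ((1 - \<nu>) * t) b a)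
      has_integral (wmean \<nu> (f a) (f b) - Cfrak f \<nu> a b)) {0..1}"
proof -
  have "(\<lambda>t. f (wmean (\<nu> * t) a b)) integrable_on {0..1}"
    using \<nu> by (intro convex_on_Icc_integrable convex_on_wmean_segment[OF cv J a b])
  moreover have "(\<lambda>t. f (wmean ((1 - \<nu>) * t) b a)) integrable_on {0..1}"
    using \<nu> by (intro convex_on_Icc_integrable convex_on_wmean_segment[OF cv J b a]) auto
  ultimately have integral: "((\<lambda>t. (1 - \<nu>) * jensen_gap f (\<nu> * t) a b + \<nu> * jensen_gap f ((1 - \<nu>) * t) b a)
      has_integral
        (1 - \<nu>) * (wmean (\<nu> / 2) (f a) (f b) - integral {0..1} (\<lambda>t. f (wmean (\<nu> * t) a b)))
        + \<nu> * (wmean ((1 - \<nu>) / 2) (f b) (f a)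
               - integral {0..1} (\<lambda>t. f (wmean ((1 - \<nu>) * t) b a)))) {0..1}"
    unfolding jensen_gap_def
    by (intro has_integral_add has_integral_mult_right has_integral_diff
        has_integral_wmean_scaled integrable_integral)
  have "(1 - \<nu>) * wmean (\<nu> / 2) (f a) (f b) + \<nu> * wmean ((1 - \<nu>) / 2) (f b) (f a)
      = wmean \<nu> (f a) (f b)"
    by (simp add: wmean_def algebra_simps)
  then show ?thesis
    unfolding Cfrak_def by (intro has_integral_eq_rhs[OF integral]) (simp add: algebra_simps)
qed

lemma r_tilde_has_integral:
  "((\<lambda>t. (1 - \<nu>) * min (\<nu> * t) (1 - \<nu> * t) + \<nu> * min ((1 - \<nu>) * t) (1 - (1 - \<nu>) * t))
     has_integral r_tilde \<nu>) {0..1}"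
  unfolding r_tilde_def
  by (intro integrable_integral integrable_continuous_interval continuous_intros)

lemma R_tilde_has_integral:
  "((\<lambda>t. (1 - \<nu>) * max (\<nu> * t) (1 - \<nu> * t) + \<nu> * max ((1 - \<nu>) * t) (1 - (1 - \<nu>) * t))
     has_integral R_tilde \<nu>) {0..1}"
  unfolding R_tilde_def
  by (intro integrable_integral integrable_continuous_interval continuous_intros)

lemma jensen_gap_mixture_bounds:
  assumes cv: "convex_on J f" and J: "convex J" and a: "a \<in> J" and b: "b \<in> J"
    and \<nu>: "0 \<le> \<nu>" "\<nu> \<le> 1" and t: "0 \<le> t" "t \<le> 1"
  defines "K \<equiv> jensen_gap f (1/2) a b"
    and "D \<equiv> (1 - \<nu>) * jensen_gap f (\<nu> * t) a b + \<nu> * jensen_gap f ((1 - \<nu>) * t) b a"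
  shows "2 * K * ((1 - \<nu>) * min (\<nu> * t) (1 - \<nu> * t) + \<nu> * min ((1 - \<nu>) * t) (1 - (1 - \<nu>) * t))
      \<le> D"
    and "D \<le> 2 * K * ((1 - \<nu>) * max (\<nu> * t) (1 - \<nu> * t)
                          + \<nu> * max ((1 - \<nu>) * t) (1 - (1 - \<nu>) * t))"
proof -
  have w1: "0 \<le> \<nu> * t" "\<nu> * t \<le> 1" and w2: "0 \<le> (1 - \<nu>) * t" "(1 - \<nu>) * t \<le> 1"
    using \<nu> t by (auto intro: mult_le_one)
  have K_swap: "jensen_gap f (1/2) b a = K"
    using jensen_gap_swap[of f "1/2" a b] by (simp add: K_def)
  note g1 = jensen_gap_bounds[OF cv J a b w1, folded K_def]
    and g2 = jensen_gap_bounds[OF cv J b a w2, unfolded K_swap]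
  have "0 \<le> 1 - \<nu>"
    using \<nu> by simp
  from mult_left_mono[OF g1(1) this] mult_left_mono[OF g2(1) \<nu>(1)]
  show "2 * K * ((1 - \<nu>) * min (\<nu> * t) (1 - \<nu> * t) + \<nu> * min ((1 - \<nu>) * t) (1 - (1 - \<nu>) * t))
      \<le> D"
    unfolding D_def by (simp add: algebra_simps)
  from mult_left_mono[OF g1(2) \<open>0 \<le> 1 - \<nu>\<close>] mult_left_mono[OF g2(2) \<nu>(1)]
  show "D \<le> 2 * K * ((1 - \<nu>) * max (\<nu> * t) (1 - \<nu> * t)
                          + \<nu> * max ((1 - \<nu>) * t) (1 - (1 - \<nu>) * t))"
    unfolding D_def by (simp add: algebra_simps)
qed

theorem theorem2p17:
  fixes J :: "real set" and f :: "real \<Rightarrow> real" and a b \<nu> :: real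
  assumes "is_interval J"
    and "convex_on J f"
    and "a \<in> J" and "b \<in> J"
    and "0 \<le> \<nu>" and "\<nu> \<le> 1"
  shows "2 * r_tilde \<nu> * (amean (f a) (f b) - f (amean a b))
           \<le> wmean \<nu> (f a) (f b) - Cfrak f \<nu> a b
       \<and> wmean \<nu> (f a) (f b) - Cfrak f \<nu> a b
           \<le> 2 * R_tilde \<nu> * (amean (f a) (f b) - f (amean a b))"
proof -
  note facts = assms(2) is_interval_convex[OF assms(1)] assms(3-6)
  note D = has_integral_wmean_minus_Cfrak[OF facts]
  define K where "K = jensen_gap f (1/2) a b"
  have "2 * K * r_tilde \<nu> \<le> wmean \<nu> (f a) (f b) - Cfrak f \<nu> a b"
    using jensen_gap_mixture_bounds(1)[OF facts, folded K_def]
    by (intro has_integral_le[OF has_integral_mult_right[OF r_tilde_has_integral] D]) auto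
  moreover have "wmean \<nu> (f a) (f b) - Cfrak f \<nu> a b \<le> 2 * K * R_tilde \<nu>"
    using jensen_gap_mixture_bounds(2)[OF facts, folded K_def]
    by (intro has_integral_le[OF D has_integral_mult_right[OF R_tilde_has_integral]]) auto
  ultimately show ?thesis
    by (simp add: K_def jensen_gap_half mult_ac)
qed

end
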